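(* For all $f\in C([0,1])$ and $g\in C([4,5])$, $$\|ME_{2,1}(f,g)\|_{L^2(\mathbb{R}^2)}\lesssim\|f\|_{L^2}\|g\|_{L^2}.$$
   Context: Let $\varphi^1,\varphi^2\in C_c^\infty(\mathbb{R})$ with $\varphi^1\equiv1$ on $[0,1]$, $\varphi^2\equiv1$ on $[4,5]$, each supported in a small neighborhood of the respective interval. For $n,m\in\mathbb{Z}$ put $\varphi^j_{n,m}(x)=\varphi^j(x)e^{2\pi inx}e^{2\pi imx^2}$; $\chi_n$ denotes the indicator of $[n,n+1)$. Define $ME_{2,1}(f,g)(x,t)=\sum_{(n,m)\in\mathbb{Z}^2}\langle f,\varphi^1_{n,m}\rangle\langle g,\varphi^2_{n,m}\rangle\chi_n(x)\chi_m(t)$, with $\langle u,v\rangle=\int u\bar v$. *)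

theory Defs
  imports "HOL-Analysis.Analysis"
begin

definition smooth_cc :: "(real \<Rightarrow> complex) \<Rightarrow> bool" where
  "smooth_cc \<phi> \<longleftrightarrow>
     (\<exists>D :: nat \<Rightarrow> real \<Rightarrow> complex. D 0 = \<phi> \<and>
         (\<forall>k x. (D k has_vector_derivative D (Suc k) x) (at x))) \<and>
     (\<exists>a b. \<forall>x. x \<notin> {a..b} \<longrightarrow> \<phi> x = 0)"

definition modul :: "(real \<Rightarrow> complex) \<Rightarrow> int \<Rightarrow> int \<Rightarrow> real \<Rightarrow> complex" where
  "modul \<phi> n m x = \<phi> x * exp (2 * pi * \<i> * of_real (of_int n * x))
                         * exp (2 * pi * \<i> * of_real (of_int m * x^2))"

text \<open>L^2 pairing <u,v> = int u conj(v), for u a function supported on [a,b]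
  (u in C([a,b]) extended by zero).\<close>
definition pair_on :: "real \<Rightarrow> real \<Rightarrow> (real \<Rightarrow> complex) \<Rightarrow> (real \<Rightarrow> complex) \<Rightarrow> complex" where
  "pair_on a b u v = integral {a..b} (\<lambda>x. u x * cnj (v x))"

definition chi :: "int \<Rightarrow> real \<Rightarrow> complex" where
  "chi n x = (if of_int n \<le> x \<and> x < of_int n + 1 then 1 else 0)"

definition ME21 :: "(real \<Rightarrow> complex) \<Rightarrow> (real \<Rightarrow> complex) \<Rightarrow> (real \<Rightarrow> complex) \<Rightarrow> (real \<Rightarrow> complex)
                     \<Rightarrow> real \<times> real \<Rightarrow> complex" where
  "ME21 \<phi>1 \<phi>2 f g = (\<lambda>(x, t). \<Sum>\<^sub>\<infinity>(n, m) \<in> (UNIV :: (int \<times> int) set).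
      pair_on 0 1 f (modul \<phi>1 n m) * pair_on 4 5 g (modul \<phi>2 n m) * chi n x * chi m t)"

definition L2_on :: "real \<Rightarrow> real \<Rightarrow> (real \<Rightarrow> complex) \<Rightarrow> real" where
  "L2_on a b u = sqrt (integral {a..b} (\<lambda>x. (cmod (u x))^2))"

definition L2_R2 :: "(real \<times> real \<Rightarrow> complex) \<Rightarrow> ennreal" where
  "L2_R2 h = (let I = (\<integral>\<^sup>+ z. ennreal ((cmod (h z))^2) \<partial>lborel)
              in if I = \<infinity> then \<infinity> else ennreal (sqrt (enn2real I)))"

end

theory Submission
  imports Defs
begin

(* Write e(t) = exp(2 pi i t). Since phi1 = 1 on [0,1], the coefficient <f, phi1_{n,m}> is the
  quadratic Fourier coefficient F^(n,m) = int F(x) e(-(n x + m x^2)) dx of the extension F of f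
  by zero, and likewise for g, so ||ME21(f,g)||^2 = sum_{n,m} |F^(n,m) G^(n,m)|^2.
  The product F^(n,m) G^(n,m) is the n-th Fourier coefficient of the twisted convolution
  K_m(u) = int F(x) G(u - x) e(-m (x^2 + (u - x)^2)) dx, which lives on [4,6]; Bessel's inequality
  in n bounds the sum over n by 2 int |K_m|^2.  For fixed u, K_m(u) is in turn the m-th coefficient
  of x |-> F(x) G(u - x) with respect to the phase -(x^2 + (u - x)^2), whose derivative 2u - 4x
  is at least 4 on [0,1] because u >= 4: this is where the separation of the supports enters.
  A Bessel inequality for such phases bounds the sum over m by 5/2 int |F(x) G(u - x)|^2 dx,
  and integrating in u gives ||ME21(f,g)||^2 <= 5 ||f||^2 ||g||^2.
  That Bessel inequality is proved by duality: if psi' >= delta and psi increases by an integer N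
  over [alpha, beta], then the characters e(m psi) are orthogonal for the weight psi', so
  D = sum_m c_m e(m psi) satisfies int psi' |D|^2 = N sum_m |c_m|^2, and the AM-GM inequality
  closes the estimate. *)

definition e2pi :: "real \<Rightarrow> complex" where
  "e2pi t = exp (2 * pi * \<i> * complex_of_real t)"

lemma e2pi_add: "e2pi (a + b) = e2pi a * e2pi b"
  unfolding e2pi_def by (simp add: distrib_left exp_add)

lemma cnj_e2pi: "cnj (e2pi a) = e2pi (- a)"
  unfolding e2pi_def exp_cnj by simp

lemma norm_e2pi [simp]: "cmod (e2pi t) = 1"
  unfolding e2pi_def by (simp add: norm_exp_eq_Re)

lemma e2pi_of_int: "e2pi (of_int k) = 1"
  unfolding e2pi_def exp_eq_1 by (auto intro!: exI[of _ k])

lemma continuous_on_e2pi [continuous_intros]: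
  "continuous_on S f \<Longrightarrow> continuous_on S (\<lambda>x. e2pi (f x))"
  unfolding e2pi_def by (intro continuous_intros)

lemma borel_measurable_e2pi [measurable]: "e2pi \<in> borel_measurable borel"
  by (intro borel_measurable_continuous_onI continuous_on_e2pi continuous_on_id)

lemma has_vector_derivative_e2pi:
  assumes "(\<psi> has_real_derivative d) (at x)"
  shows "((\<lambda>x. e2pi (\<psi> x)) has_vector_derivative (2 * pi * \<i> * of_real d) * e2pi (\<psi> x)) (at x)"
proof -
  have "((\<lambda>z. exp (2 * pi * \<i> * z)) has_field_derivative 2 * pi * \<i> * e2pi (\<psi> x))
          (at (complex_of_real (\<psi> x)))"
    unfolding e2pi_def by (auto intro!: derivative_eq_intros)
  from field_vector_diff_chain_at[OF has_vector_derivative_of_real[OF assms] this]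
  show ?thesis
    unfolding e2pi_def o_def by (simp add: ac_simps)
qed

lemma integrable_lborel_bounded_support:
  fixes h :: "real \<Rightarrow> 'a::{banach, second_countable_topology}"
  assumes "h \<in> borel_measurable lborel" "\<And>x. norm (h x) \<le> C" "\<And>x. x \<notin> {a..b} \<Longrightarrow> h x = 0"
  shows "integrable lborel h"
proof (rule Bochner_Integration.integrable_bound)
  show "integrable lborel (\<lambda>x. C * indicator {a..b} x :: real)"
    by (intro integrable_mult_right integrable_real_indicator) (auto simp: emeasure_lborel_Icc_eq)
  show "AE x in lborel. norm (h x) \<le> norm (C * indicator {a..b} x :: real)"
    using assms(2,3) by (auto intro!: AE_I2 split: split_indicator)
       (metis norm_ge_zero order_trans abs_ge_self)+
qed (use assms in auto)

lemma mult_le_weighted_sum_squares: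
  fixes p q a b :: real
  assumes "0 \<le> b" "1 \<le> 4 * a * b"
  shows "p * q \<le> a * p\<^sup>2 + b * q\<^sup>2"
proof -
  have a: "a > 0"
    using assms by (smt (verit) mult_nonneg_nonneg mult_nonpos_nonneg)
  have "0 \<le> (2 * a * p - q)\<^sup>2 + (4 * a * b - 1) * q\<^sup>2"
    using assms by simp
  also have "\<dots> = 4 * a * (a * p\<^sup>2 + b * q\<^sup>2 - p * q)"
    by (simp add: power2_eq_square algebra_simps)
  finally show ?thesis
    using a by (simp add: zero_le_mult_iff)
qed

lemma integral_norm_mult_le_weighted:
  fixes h D :: "real \<Rightarrow> complex" and w :: "real \<Rightarrow> real"
  assumes h: "h \<in> borel_measurable lborel" "\<And>x. cmod (h x) \<le> B" "\<And>x. x \<notin> {\<alpha>..\<beta>} \<Longrightarrow> h x = 0"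
    and D: "continuous_on UNIV D" "\<And>x. cmod (D x) \<le> BD"
    and w: "continuous_on {\<alpha>..\<beta>} w" "\<And>x. x \<in> {\<alpha>..\<beta>} \<Longrightarrow> \<delta> \<le> w x"
    and "0 < \<delta>" "0 < t"
  shows "(LINT x|lborel. cmod (h x) * cmod (D x))
           \<le> t / (2 * \<delta>) * (LINT x|lborel. (cmod (h x))\<^sup>2)
             + 1 / (2 * t) * (LINT x|lborel. indicator {\<alpha>..\<beta>} x * w x * (cmod (D x))\<^sup>2)"
proof -
  have [measurable]: "h \<in> borel_measurable borel" "D \<in> borel_measurable borel"
    using h(1) D(1) borel_measurable_continuous_onI by auto
  have "0 \<le> B"
    using h(2) norm_ge_zero order_trans by blast
  have int_hD: "integrable lborel (\<lambda>x. cmod (h x) * cmod (D x))"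
    by (rule integrable_lborel_bounded_support[where C="B * BD" and a=\<alpha> and b=\<beta>])
       (measurable, auto simp: h intro!: mult_mono h D \<open>0 \<le> B\<close>)
  have int_h2: "integrable lborel (\<lambda>x. (cmod (h x))\<^sup>2)"
    by (rule integrable_lborel_bounded_support[where C="B * B" and a=\<alpha> and b=\<beta>])
       (measurable, auto simp: h power2_eq_square intro!: mult_mono h \<open>0 \<le> B\<close>)
  have "continuous_on {\<alpha>..\<beta>} (\<lambda>x. w x * (cmod (D x))\<^sup>2)"
    by (auto intro!: continuous_intros w(1) continuous_on_subset[OF D(1)])
  note borel_integrable_atLeastAtMost'[OF this]
  then have int_wD2: "integrable lborel (\<lambda>x. indicator {\<alpha>..\<beta>} x * w x * (cmod (D x))\<^sup>2)"
    unfolding set_integrable_def by (simp add: mult.assoc)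
  have pointwise: "cmod (h x) * cmod (D x)
      \<le> t / (2 * \<delta>) * (cmod (h x))\<^sup>2 + 1 / (2 * t) * (indicator {\<alpha>..\<beta>} x * w x * (cmod (D x))\<^sup>2)"
    for x
  proof (cases "x \<in> {\<alpha>..\<beta>}")
    case True
    then have "\<delta> \<le> w x"
      using w(2) by blast
    then show ?thesis
      using mult_le_weighted_sum_squares[of "w x / (2 * t)" "t / (2 * \<delta>)" "cmod (h x)" "cmod (D x)"]
        True \<open>0 < \<delta>\<close> \<open>0 < t\<close> by (simp add: field_simps)
  qed (simp add: h)
  have "(LINT x|lborel. cmod (h x) * cmod (D x))
      \<le> (LINT x|lborel. t / (2 * \<delta>) * (cmod (h x))\<^sup>2
                        + 1 / (2 * t) * (indicator {\<alpha>..\<beta>} x * w x * (cmod (D x))\<^sup>2))"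
    using int_hD int_h2 int_wD2 pointwise by (intro integral_mono) auto
  then show ?thesis
    using int_h2 int_wD2 by simp
qed

lemma integral_mult_cnj_e2pi_sum:
  assumes "\<And>m. m \<in> M \<Longrightarrow> integrable lborel (\<lambda>x. h x * e2pi (- (of_int m * \<psi> x)))"
  shows "(LINT x|lborel. h x * cnj (\<Sum>m\<in>M. c m * e2pi (of_int m * \<psi> x)))
           = (\<Sum>m\<in>M. cnj (c m) * (LINT x|lborel. h x * e2pi (- (of_int m * \<psi> x))))"
proof -
  have "h x * cnj (\<Sum>m\<in>M. c m * e2pi (of_int m * \<psi> x))
      = (\<Sum>m\<in>M. cnj (c m) * (h x * e2pi (- (of_int m * \<psi> x))))" for x
    by (simp add: cnj_e2pi sum_distrib_left ac_simps)
  then show ?thesis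
    using assms
    by (simp only: Bochner_Integration.integral_sum integrable_mult_right integral_mult_right_zero)
qed

context
  fixes \<psi> \<psi>' :: "real \<Rightarrow> real" and \<alpha> \<beta> :: real and N :: nat
  assumes deriv: "\<And>x. (\<psi> has_real_derivative \<psi>' x) (at x)" and cont: "continuous_on UNIV \<psi>'"
    and le: "\<alpha> \<le> \<beta>" and increment: "\<psi> \<beta> = \<psi> \<alpha> + real N"
begin

lemma continuous_on_phase: "continuous_on S \<psi>"
  using deriv by (meson DERIV_isCont continuous_at_imp_continuous_on)

lemma has_integral_weight_e2pi:
  "((\<lambda>x. of_real (\<psi>' x) * e2pi (of_int j * \<psi> x)) has_integral (if j = 0 then of_nat N else 0)) {\<alpha>..\<beta>}"
proof (cases "j = 0")
  case True
  have "((\<lambda>x. of_real (\<psi>' x) * e2pi (of_int j * \<psi> x)) has_integral (of_real (\<psi> \<beta>) - of_real (\<psi> \<alpha>))) {\<alpha>..\<beta>}"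
  proof (rule fundamental_theorem_of_calculus[OF le], rule has_vector_derivative_at_within)
    show "((\<lambda>x. complex_of_real (\<psi> x)) has_vector_derivative of_real (\<psi>' x) * e2pi (of_int j * \<psi> x)) (at x)"
      for x
      using True by (simp add: e2pi_def has_vector_derivative_of_real[OF deriv])
  qed
  then show ?thesis
    using True increment by simp
next
  case False
  define \<Phi> where "\<Phi> x = e2pi (of_int j * \<psi> x) / (2 * pi * \<i> * of_int j)" for x
  have "((\<lambda>x. of_real (\<psi>' x) * e2pi (of_int j * \<psi> x)) has_integral (\<Phi> \<beta> - \<Phi> \<alpha>)) {\<alpha>..\<beta>}"
  proof (rule fundamental_theorem_of_calculus[OF le], rule has_vector_derivative_at_within)
    fix x
    have "((\<lambda>x. e2pi (of_int j * \<psi> x)) has_vector_derivative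
            (2 * pi * \<i> * of_int j) * (of_real (\<psi>' x) * e2pi (of_int j * \<psi> x))) (at x)"
      using has_vector_derivative_e2pi[OF DERIV_cmult[OF deriv], of "of_int j"] by (simp add: ac_simps)
    from has_vector_derivative_divide[OF this, of "2 * pi * \<i> * of_int j"]
    show "(\<Phi> has_vector_derivative of_real (\<psi>' x) * e2pi (of_int j * \<psi> x)) (at x)"
      unfolding \<Phi>_def using False by simp
  qed
  moreover have "e2pi (of_int j * \<psi> \<beta>) = e2pi (of_int j * \<psi> \<alpha>) * e2pi (of_int (j * int N))"
    using increment by (simp add: e2pi_add[symmetric] distrib_left)
  then have "\<Phi> \<beta> = \<Phi> \<alpha>"
    unfolding \<Phi>_def e2pi_of_int by simp
  ultimately show ?thesis
    using False by simp
qed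

lemma integral_weight_e2pi:
  "(LINT x|lborel. indicator {\<alpha>..\<beta>} x *\<^sub>R (of_real (\<psi>' x) * e2pi (of_int j * \<psi> x)))
     = (if j = 0 then of_nat N else 0)"
proof -
  have "continuous_on {\<alpha>..\<beta>} (\<lambda>x. of_real (\<psi>' x) * e2pi (of_int j * \<psi> x))"
    by (auto intro!: continuous_intros continuous_on_subset[OF cont] continuous_on_phase)
  from set_borel_integral_eq_integral(2)[OF borel_integrable_atLeastAtMost'[OF this]]
  show ?thesis
    using integral_unique[OF has_integral_weight_e2pi] by (simp add: set_lebesgue_integral_def)
qed

lemma integral_weight_norm_sq_e2pi_sum:
  fixes c :: "int \<Rightarrow> complex"
  assumes "finite M"
  shows "(LINT x|lborel. indicator {\<alpha>..\<beta>} x * \<psi>' x * (cmod (\<Sum>m\<in>M. c m * e2pi (of_int m * \<psi> x)))\<^sup>2)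
           = real N * (\<Sum>m\<in>M. (cmod (c m))\<^sup>2)"
proof -
  define E where "E j x = indicator {\<alpha>..\<beta>} x *\<^sub>R (complex_of_real (\<psi>' x) * e2pi (of_int j * \<psi> x))"
    for j x
  have int_E: "integrable lborel (E j)" for j
  proof -
    have "continuous_on {\<alpha>..\<beta>} (\<lambda>x. complex_of_real (\<psi>' x) * e2pi (of_int j * \<psi> x))"
      by (auto intro!: continuous_intros continuous_on_subset[OF cont] continuous_on_phase)
    then show ?thesis
      using borel_integrable_atLeastAtMost' unfolding set_integrable_def E_def by blast
  qed
  have "complex_of_real ((cmod (\<Sum>m\<in>M. c m * e2pi (of_int m * \<psi> x)))\<^sup>2)
      = (\<Sum>m\<in>M. c m * e2pi (of_int m * \<psi> x)) * cnj (\<Sum>k\<in>M. c k * e2pi (of_int k * \<psi> x))" for x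
    by (rule complex_norm_square)
  also have "\<dots> x = (\<Sum>m\<in>M. \<Sum>k\<in>M. c m * cnj (c k) * e2pi (of_int (m - k) * \<psi> x))" for x
    by (simp add: sum_product cnj_e2pi e2pi_add[symmetric] algebra_simps)
  finally have expand: "complex_of_real (indicator {\<alpha>..\<beta>} x * \<psi>' x *
        (cmod (\<Sum>m\<in>M. c m * e2pi (of_int m * \<psi> x)))\<^sup>2)
      = (\<Sum>m\<in>M. \<Sum>k\<in>M. c m * cnj (c k) * E (m - k) x)" for x
    unfolding of_real_mult by (simp add: E_def sum_distrib_left scaleR_conv_of_real ac_simps)
  have "integrable lborel (\<lambda>x. \<Sum>k\<in>M. c m * cnj (c k) * E (m - k) x)" for m
    by (intro Bochner_Integration.integrable_sum integrable_mult_right int_E)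
  then have "complex_of_real (LINT x|lborel. indicator {\<alpha>..\<beta>} x * \<psi>' x *
        (cmod (\<Sum>m\<in>M. c m * e2pi (of_int m * \<psi> x)))\<^sup>2)
      = (\<Sum>m\<in>M. \<Sum>k\<in>M. c m * cnj (c k) * (LINT x|lborel. E (m - k) x))"
    by (simp only: integral_complex_of_real[symmetric] expand Bochner_Integration.integral_sum
        integrable_mult_right int_E integral_mult_right_zero)
  also have "\<dots> = (\<Sum>m\<in>M. \<Sum>k\<in>M. if k = m then c m * cnj (c k) * of_nat N else 0)"
    unfolding E_def integral_weight_e2pi by (intro sum.cong refl) auto
  also have "\<dots> = complex_of_real (real N * (\<Sum>m\<in>M. (cmod (c m))\<^sup>2))"
    using assms by (simp add: sum_distrib_left mult.commute flip: complex_norm_square)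
  finally show ?thesis
    by (simp only: of_real_eq_iff)
qed

lemma bessel_inequality_phase:
  fixes h :: "real \<Rightarrow> complex"
  assumes "N > 0" and \<delta>: "\<delta> > 0" "\<And>x. x \<in> {\<alpha>..\<beta>} \<Longrightarrow> \<delta> \<le> \<psi>' x"
    and h: "h \<in> borel_measurable lborel" "\<And>x. cmod (h x) \<le> B" "\<And>x. x \<notin> {\<alpha>..\<beta>} \<Longrightarrow> h x = 0"
    and M: "finite M"
  shows "(\<Sum>m\<in>M. (cmod (LINT x|lborel. h x * e2pi (- (of_int m * \<psi> x))))\<^sup>2)
           \<le> real N / \<delta> * (LINT x|lborel. (cmod (h x))\<^sup>2)"
proof -
  define c where "c m = (LINT x|lborel. h x * e2pi (- (of_int m * \<psi> x)))" for m
  define D where "D x = (\<Sum>m\<in>M. c m * e2pi (of_int m * \<psi> x))" for x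
  define S where "S = (\<Sum>m\<in>M. (cmod (c m))\<^sup>2)"
  have [measurable]: "h \<in> borel_measurable borel" "\<psi> \<in> borel_measurable borel"
    using h(1) continuous_on_phase borel_measurable_continuous_onI by auto
  have "integrable lborel (\<lambda>x. h x * e2pi (- (of_int m * \<psi> x)))" for m
    by (rule integrable_lborel_bounded_support[where C=B and a=\<alpha> and b=\<beta>])
       (measurable, auto simp: norm_mult h)
  then have "(LINT x|lborel. h x * cnj (D x)) = (\<Sum>m\<in>M. cnj (c m) * c m)"
    unfolding D_def by (subst integral_mult_cnj_e2pi_sum) (simp_all add: c_def)
  also have "\<dots> = complex_of_real S"
    unfolding S_def by (simp add: mult.commute flip: complex_norm_square)
  finally have "(LINT x|lborel. h x * cnj (D x)) = complex_of_real S" .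
  moreover have "0 \<le> S"
    unfolding S_def by (simp add: sum_nonneg)
  ultimately have "S = cmod (LINT x|lborel. h x * cnj (D x))"
    by simp
  also have "\<dots> \<le> (LINT x|lborel. cmod (h x * cnj (D x)))"
    by (rule integral_norm_bound)
  also have "\<dots> = (LINT x|lborel. cmod (h x) * cmod (D x))"
    by (simp add: norm_mult)
  also have "\<dots> \<le> real N / (2 * \<delta>) * (LINT x|lborel. (cmod (h x))\<^sup>2)
                + 1 / (2 * real N) * (LINT x|lborel. indicator {\<alpha>..\<beta>} x * \<psi>' x * (cmod (D x))\<^sup>2)"
  proof (rule integral_norm_mult_le_weighted[OF h _ _ continuous_on_subset[OF cont] \<delta>(2) \<delta>(1)])
    show "continuous_on UNIV D"
      unfolding D_def by (auto intro!: continuous_intros continuous_on_phase)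
    show "cmod (D x) \<le> (\<Sum>m\<in>M. cmod (c m))" for x
      unfolding D_def by (rule order_trans[OF norm_sum]) (simp add: norm_mult)
  qed (use \<open>N > 0\<close> in auto)
  also have "\<dots> = real N / (2 * \<delta>) * (LINT x|lborel. (cmod (h x))\<^sup>2) + S / 2"
    unfolding D_def S_def integral_weight_norm_sq_e2pi_sum[OF M] using \<open>N > 0\<close> by simp
  finally show ?thesis
    unfolding S_def c_def by (simp add: field_simps)
qed

end

lemma nn_integral_count_space_int_le:
  fixes c :: "int \<Rightarrow> ennreal"
  assumes "\<And>M. finite M \<Longrightarrow> (\<Sum>n\<in>M. c n) \<le> B"
  shows "(\<integral>\<^sup>+n. c n \<partial>count_space UNIV) \<le> B"
proof -
  define f where "f k n = c n * indicator {- int k..int k} n" for k :: nat and n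
  have "incseq f"
    unfolding f_def by (auto simp: incseq_def le_fun_def split: split_indicator)
  have "c n = (SUP k. f k n)" for n
  proof (rule antisym)
    show "c n \<le> (SUP k. f k n)"
      by (rule SUP_upper2[where i="nat \<bar>n\<bar>"]) (auto simp: f_def split: split_indicator)
  qed (auto intro!: SUP_least simp: f_def split: split_indicator)
  then have "(\<integral>\<^sup>+n. c n \<partial>count_space UNIV) = (SUP k. integral\<^sup>N (count_space UNIV) (f k))"
    using nn_integral_monotone_convergence_SUP[OF \<open>incseq f\<close>] by simp
  also have "\<dots> \<le> B"
  proof (rule SUP_least)
    fix k
    have "integral\<^sup>N (count_space UNIV) (f k) = (\<Sum>n\<in>{- int k..int k}. c n)"
      unfolding f_def by (subst nn_integral_indicator_finite) auto
    then show "integral\<^sup>N (count_space UNIV) (f k) \<le> B"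
      using assms[of "{- int k..int k}"] by simp
  qed
  finally show ?thesis .
qed

definition quad_coeff :: "(real \<Rightarrow> complex) \<Rightarrow> int \<Rightarrow> int \<Rightarrow> complex" where
  "quad_coeff F n m = (LINT x|lborel. F x * e2pi (- (of_int n * x + of_int m * x\<^sup>2)))"

definition twisted_conv :: "(real \<Rightarrow> complex) \<Rightarrow> (real \<Rightarrow> complex) \<Rightarrow> int \<Rightarrow> real \<Rightarrow> complex" where
  "twisted_conv F G m u = (LINT x|lborel. F x * G (u - x) * e2pi (- (of_int m * (x\<^sup>2 + (u - x)\<^sup>2))))"

locale separated_supports =
  fixes F G :: "real \<Rightarrow> complex" and BF BG :: real
  assumes F_measurable [measurable]: "F \<in> borel_measurable borel"
    and G_measurable [measurable]: "G \<in> borel_measurable borel"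
    and norm_F_le: "\<And>x. cmod (F x) \<le> BF" and norm_G_le: "\<And>x. cmod (G x) \<le> BG"
    and F_support: "\<And>x. x \<notin> {0..1} \<Longrightarrow> F x = 0"
    and G_support: "\<And>x. x \<notin> {4..5} \<Longrightarrow> G x = 0"
begin

lemma bounds_nonneg: "0 \<le> BF" "0 \<le> BG"
  using order_trans[OF norm_ge_zero norm_F_le] order_trans[OF norm_ge_zero norm_G_le] by blast+

lemma norm_F_G_le: "cmod (F x * G y) \<le> BF * BG"
  unfolding norm_mult by (intro mult_mono norm_F_le norm_G_le bounds_nonneg norm_ge_zero)

lemma F_G_shift_eq_0: "x \<notin> {0..1} \<or> u \<notin> {4..6} \<Longrightarrow> F x * G (u - x) = 0"
  using F_support G_support by (cases "x \<in> {0..1}") auto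

lemma twisted_conv_eq_0: "u \<notin> {4..6} \<Longrightarrow> twisted_conv F G m u = 0"
  unfolding twisted_conv_def by (simp add: F_G_shift_eq_0)

lemma norm_twisted_conv_le: "cmod (twisted_conv F G m u) \<le> BF * BG"
proof -
  have "cmod (twisted_conv F G m u)
      \<le> (LINT x|lborel. cmod (F x * G (u - x) * e2pi (- (of_int m * (x\<^sup>2 + (u - x)\<^sup>2)))))"
    unfolding twisted_conv_def by (rule integral_norm_bound)
  also have "\<dots> \<le> (LINT x::real|lborel. BF * BG * indicator {0..1} x)"
  proof (rule Bochner_Integration.integral_mono')
    show "integrable lborel (\<lambda>x::real. BF * BG * indicator {0..1} x :: real)"
      by (intro integrable_mult_right integrable_real_indicator) (auto simp: emeasure_lborel_Icc_eq)
    show "cmod (F x * G (u - x) * e2pi (- (of_int m * (x\<^sup>2 + (u - x)\<^sup>2)))) \<le> BF * BG * indicator {0..1} x"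
      for x
      using norm_F_G_le[of x "u - x"] F_G_shift_eq_0[of x u] by (auto simp: norm_mult split: split_indicator)
    show "0 \<le> BF * BG * indicator {0..1} x" for x
      using bounds_nonneg by (simp split: split_indicator)
  qed
  finally show ?thesis
    by simp
qed

lemma borel_measurable_twisted_conv [measurable]: "twisted_conv F G m \<in> borel_measurable borel"
proof -
  have "(\<lambda>u. LINT x|lborel. F x * G (u - x) * e2pi (- (of_int m * (x\<^sup>2 + (u - x)\<^sup>2))))
          \<in> borel_measurable lborel"
    by (rule lborel.borel_measurable_lebesgue_integral) measurable
  then show ?thesis
    unfolding twisted_conv_def[abs_def] by simp
qed

lemma quad_coeff_mult_eq_integral_twisted_conv:
  "quad_coeff F n m * quad_coeff G n m = (LINT u|lborel. twisted_conv F G m u * e2pi (- (of_int n * u)))"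
proof -
  define A where "A x = F x * e2pi (- (of_int n * x + of_int m * x\<^sup>2))" for x
  define B where "B x = G x * e2pi (- (of_int n * x + of_int m * x\<^sup>2))" for x
  define K where "K x u = F x * G (u - x) * e2pi (- (of_int m * (x\<^sup>2 + (u - x)\<^sup>2))) * e2pi (- (of_int n * u))"
    for x u
  have K_eq: "A x * B (u - x) = K x u" for x u
    unfolding A_def B_def K_def
    by (simp add: e2pi_add[symmetric] algebra_simps power2_eq_square)
  have K_bound: "norm (K x u) \<le> BF * BG * indicator ({0..1} \<times> {4..6}) (x, u)" for x u
  proof (cases "x \<in> {0..1} \<and> u \<in> {4..6}")
    case True
    then show ?thesis
      using norm_F_G_le[of x "u - x"] by (simp add: K_def norm_mult)
  qed (use F_G_shift_eq_0[of x u] in \<open>auto simp: K_def\<close>)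
  have "integrable (lborel \<Otimes>\<^sub>M lborel) (\<lambda>(x, u). K x u)"
  proof (rule Bochner_Integration.integrable_bound)
    show "integrable (lborel \<Otimes>\<^sub>M lborel) (\<lambda>z::real \<times> real. BF * BG * indicator ({0..1} \<times> {4..6}) z)"
      by (intro integrable_mult_right integrable_real_indicator)
         (auto simp: lborel.emeasure_pair_measure_Times ennreal_mult_less_top)
    show "AE z in lborel \<Otimes>\<^sub>M lborel. norm ((\<lambda>(x, u). K x u) z) \<le> norm (BF * BG * indicator ({0..1} \<times> {4..6}) z)"
      using K_bound bounds_nonneg by (intro AE_I2) (auto split: prod.splits)
  qed (unfold K_def, measurable)
  have "quad_coeff F n m * quad_coeff G n m = (LINT x|lborel. LINT y|lborel. A x * B y)"
    unfolding quad_coeff_def A_def[symmetric] B_def[symmetric] by simp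
  also have "\<dots> = (LINT x|lborel. LINT u|lborel. K x u)"
    using lborel_integral_real_affine[where c=1 and t="-x" and f="\<lambda>y. A x * B y" for x]
    by (simp add: K_eq)
  also have "\<dots> = (LINT u|lborel. LINT x|lborel. K x u)"
    by (rule lborel_pair.Fubini_integral[symmetric]) fact
  also have "\<dots> = (LINT u|lborel. twisted_conv F G m u * e2pi (- (of_int n * u)))"
    unfolding K_def twisted_conv_def by simp
  finally show ?thesis .
qed

lemma integrable_twisted_conv_sq: "integrable lborel (\<lambda>u. (cmod (twisted_conv F G m u))\<^sup>2)"
  by (rule integrable_lborel_bounded_support[where C="(BF * BG)\<^sup>2" and a=4 and b=6])
     (auto simp: twisted_conv_eq_0 intro!: power_mono norm_twisted_conv_le)

lemma integrable_F_G_shift_sq: "integrable lborel (\<lambda>x. (cmod (F x * G (u - x)))\<^sup>2)"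
  by (rule integrable_lborel_bounded_support[where C="(BF * BG)\<^sup>2" and a=0 and b=1])
     (measurable, auto simp: F_G_shift_eq_0 intro!: power_mono norm_F_G_le)

lemma sum_quad_coeff_sq_le:
  assumes "finite M"
  shows "(\<Sum>n\<in>M. (cmod (quad_coeff F n m * quad_coeff G n m))\<^sup>2)
           \<le> 2 * (LINT u|lborel. (cmod (twisted_conv F G m u))\<^sup>2)"
proof -
  have "(\<Sum>n\<in>M. (cmod (LINT u|lborel. twisted_conv F G m u * e2pi (- (of_int n * u))))\<^sup>2)
          \<le> real 2 / 1 * (LINT u|lborel. (cmod (twisted_conv F G m u))\<^sup>2)"
    by (rule bessel_inequality_phase[where \<psi>'="\<lambda>_. 1" and \<alpha>=4 and \<beta>=6 and B="BF * BG"])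
       (auto simp: assms norm_twisted_conv_le twisted_conv_eq_0)
  then show ?thesis
    by (simp add: quad_coeff_mult_eq_integral_twisted_conv)
qed

lemma nn_integral_quad_coeff_sq_le_twisted_conv:
  "(\<integral>\<^sup>+n. ennreal ((cmod (quad_coeff F n m * quad_coeff G n m))\<^sup>2) \<partial>count_space UNIV)
     \<le> 2 * (\<integral>\<^sup>+u. ennreal ((cmod (twisted_conv F G m u))\<^sup>2) \<partial>lborel)"
proof (rule nn_integral_count_space_int_le)
  fix M :: "int set"
  assume "finite M"
  then have "ennreal (\<Sum>n\<in>M. (cmod (quad_coeff F n m * quad_coeff G n m))\<^sup>2)
      \<le> ennreal (2 * (LINT u|lborel. (cmod (twisted_conv F G m u))\<^sup>2))"
    by (intro ennreal_leI sum_quad_coeff_sq_le)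
  then show "(\<Sum>n\<in>M. ennreal ((cmod (quad_coeff F n m * quad_coeff G n m))\<^sup>2))
      \<le> 2 * (\<integral>\<^sup>+u. ennreal ((cmod (twisted_conv F G m u))\<^sup>2) \<partial>lborel)"
    by (simp add: ennreal_mult nn_integral_eq_integral integrable_twisted_conv_sq)
qed

lemma sum_twisted_conv_sq_le:
  assumes "finite M"
  shows "(\<Sum>m\<in>M. (cmod (twisted_conv F G m u))\<^sup>2)
           \<le> 5 / 2 * (LINT x|lborel. (cmod (F x * G (u - x)))\<^sup>2)"
proof (cases "u \<in> {4..6}")
  case False
  then show ?thesis
    by (simp add: twisted_conv_eq_0)
next
  case True
  define q where "q x = x\<^sup>2 + (u - x)\<^sup>2" for x
  \<comment> \<open>On an interval [x0, 1] over which the phase -q increases by exactly 10 and where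
    its derivative 2u - 4x is at least 4, Bessel's inequality costs a factor 10/4.\<close>
  have "\<exists>x. -10 \<le> x \<and> x \<le> 0 \<and> q x = q 1 + 10"
    using True by (intro IVT2') (auto simp: q_def power2_eq_square algebra_simps intro!: continuous_intros)
  then obtain x0 where "x0 \<le> 0" "q x0 = q 1 + 10"
    by blast
  have "(\<Sum>m\<in>uminus ` M. (cmod (LINT x|lborel. F x * G (u - x) * e2pi (- (of_int m * - q x))))\<^sup>2)
          \<le> real 10 / 4 * (LINT x|lborel. (cmod (F x * G (u - x)))\<^sup>2)"
  proof (rule bessel_inequality_phase[where \<psi>'="\<lambda>x. 2 * u - 4 * x" and \<alpha>=x0 and \<beta>=1 and B="BF * BG"])
    show "((\<lambda>x. - q x) has_real_derivative 2 * u - 4 * x) (at x)" for x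
      unfolding q_def by (auto intro!: derivative_eq_intros simp: algebra_simps)
    show "4 \<le> 2 * u - 4 * x" if "x \<in> {x0..1}" for x
      using that True by auto
    show "F x * G (u - x) = 0" if "x \<notin> {x0..1}" for x
      using that \<open>x0 \<le> 0\<close> F_G_shift_eq_0[of x u] by auto
  qed (use assms \<open>x0 \<le> 0\<close> \<open>q x0 = q 1 + 10\<close> norm_F_G_le in \<open>auto intro!: continuous_intros\<close>)
  also have "(\<Sum>m\<in>uminus ` M. (cmod (LINT x|lborel. F x * G (u - x) * e2pi (- (of_int m * - q x))))\<^sup>2)
      = (\<Sum>m\<in>M. (cmod (twisted_conv F G m u))\<^sup>2)"
  proof -
    have "- (of_int (- m) * - q x) = - (of_int m * (x\<^sup>2 + (u - x)\<^sup>2))" for m :: int and x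
      unfolding q_def by (simp add: algebra_simps)
    moreover have "inj_on uminus M"
      by simp
    ultimately show ?thesis
      by (simp only: sum.reindex o_def twisted_conv_def)
  qed
  finally show ?thesis
    by simp
qed

lemma nn_integral_twisted_conv_sq_le:
  "(\<integral>\<^sup>+m. ennreal ((cmod (twisted_conv F G m u))\<^sup>2) \<partial>count_space UNIV)
     \<le> ennreal (5 / 2) * (\<integral>\<^sup>+x. ennreal ((cmod (F x * G (u - x)))\<^sup>2) \<partial>lborel)"
proof (rule nn_integral_count_space_int_le)
  fix M :: "int set"
  assume "finite M"
  have "(\<Sum>m\<in>M. ennreal ((cmod (twisted_conv F G m u))\<^sup>2))
      = ennreal (\<Sum>m\<in>M. (cmod (twisted_conv F G m u))\<^sup>2)"
    by simp
  also have "\<dots> \<le> ennreal (5 / 2 * (LINT x|lborel. (cmod (F x * G (u - x)))\<^sup>2))"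
    using \<open>finite M\<close> by (intro ennreal_leI sum_twisted_conv_sq_le)
  also have "\<dots> = ennreal (5 / 2) * (\<integral>\<^sup>+x. ennreal ((cmod (F x * G (u - x)))\<^sup>2) \<partial>lborel)"
    by (subst ennreal_mult') (simp_all add: nn_integral_eq_integral integrable_F_G_shift_sq)
  finally show "(\<Sum>m\<in>M. ennreal ((cmod (twisted_conv F G m u))\<^sup>2)) \<le> \<dots>" .
qed

lemma nn_integral_quad_coeff_sq_le:
  "(\<integral>\<^sup>+n. \<integral>\<^sup>+m. ennreal ((cmod (quad_coeff F n m * quad_coeff G n m))\<^sup>2)
      \<partial>count_space UNIV \<partial>count_space UNIV)
    \<le> 5 * (\<integral>\<^sup>+x. ennreal ((cmod (F x))\<^sup>2) \<partial>lborel) * (\<integral>\<^sup>+y. ennreal ((cmod (G y))\<^sup>2) \<partial>lborel)"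
proof -
  let ?Q = "\<lambda>n m. ennreal ((cmod (quad_coeff F n m * quad_coeff G n m))\<^sup>2)"
  let ?K = "\<lambda>m u. ennreal ((cmod (twisted_conv F G m u))\<^sup>2)"
  let ?FG = "\<lambda>x u. ennreal ((cmod (F x))\<^sup>2) * ennreal ((cmod (G (u - x)))\<^sup>2)"
  have shift: "(\<integral>\<^sup>+u. ennreal ((cmod (G (u - x)))\<^sup>2) \<partial>lborel) = (\<integral>\<^sup>+y. ennreal ((cmod (G y))\<^sup>2) \<partial>lborel)"
    for x
    using nn_integral_real_affine[where c=1 and t="-x" and f="\<lambda>y. ennreal ((cmod (G y))\<^sup>2)"] by simp
  have "(\<integral>\<^sup>+n. \<integral>\<^sup>+m. ?Q n m \<partial>count_space UNIV \<partial>count_space UNIV)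
      = (\<integral>\<^sup>+m. \<integral>\<^sup>+n. ?Q n m \<partial>count_space UNIV \<partial>count_space UNIV)"
    by (rule nn_integral_count_space_nn_integral) auto
  also have "\<dots> \<le> (\<integral>\<^sup>+m. 2 * (\<integral>\<^sup>+u. ?K m u \<partial>lborel) \<partial>count_space UNIV)"
    by (intro nn_integral_mono nn_integral_quad_coeff_sq_le_twisted_conv)
  also have "\<dots> = 2 * (\<integral>\<^sup>+u. \<integral>\<^sup>+m. ?K m u \<partial>count_space UNIV \<partial>lborel)"
    by (simp add: nn_integral_cmult nn_integral_count_space_nn_integral)
  also have "\<dots> \<le> 2 * (\<integral>\<^sup>+u. ennreal (5 / 2) * (\<integral>\<^sup>+x. ?FG x u \<partial>lborel) \<partial>lborel)"
    by (intro mult_left_mono nn_integral_mono order_trans[OF nn_integral_twisted_conv_sq_le])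
       (simp_all add: norm_mult power_mult_distrib ennreal_mult)
  also have "\<dots> = 5 * (\<integral>\<^sup>+u. \<integral>\<^sup>+x. ?FG x u \<partial>lborel \<partial>lborel)"
    using ennreal_mult'[of 2 "5 / 2"] by (simp add: nn_integral_cmult mult.assoc[symmetric])
  also have "\<dots> = 5 * (\<integral>\<^sup>+x. \<integral>\<^sup>+u. ?FG x u \<partial>lborel \<partial>lborel)"
    by (subst lborel_pair.Fubini') measurable
  also have "\<dots> = 5 * (\<integral>\<^sup>+x. ennreal ((cmod (F x))\<^sup>2) \<partial>lborel)
                      * (\<integral>\<^sup>+y. ennreal ((cmod (G y))\<^sup>2) \<partial>lborel)"
    by (simp add: nn_integral_cmult nn_integral_multc shift mult.assoc)
  finally show ?thesis .
qed

end

lemma nn_integral_floor: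
  fixes \<phi> :: "int \<Rightarrow> ennreal"
  shows "(\<integral>\<^sup>+t. \<phi> \<lfloor>t::real\<rfloor> \<partial>lborel) = (\<integral>\<^sup>+m. \<phi> m \<partial>count_space UNIV)"
proof -
  have "\<phi> \<lfloor>t\<rfloor> = (\<integral>\<^sup>+m. \<phi> m * indicator {real_of_int m..<real_of_int m + 1} t \<partial>count_space UNIV)" for t :: real
  proof -
    have "(\<integral>\<^sup>+m. \<phi> m * indicator {real_of_int m..<real_of_int m + 1} t \<partial>count_space UNIV)
        = (\<Sum>m\<in>{\<lfloor>t\<rfloor>}. \<phi> m * indicator {real_of_int m..<real_of_int m + 1} t)"
      by (rule nn_integral_count_space') (auto dest: floor_unique split: split_indicator)
    then show ?thesis
      by (simp add: indicator_def)
  qed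
  then have "(\<integral>\<^sup>+t. \<phi> \<lfloor>t::real\<rfloor> \<partial>lborel)
      = (\<integral>\<^sup>+t. \<integral>\<^sup>+m. \<phi> m * indicator {real_of_int m..<real_of_int m + 1} t \<partial>count_space UNIV \<partial>lborel)"
    by simp
  also have "\<dots> = (\<integral>\<^sup>+m. \<integral>\<^sup>+t. \<phi> m * indicator {real_of_int m..<real_of_int m + 1} t \<partial>lborel \<partial>count_space UNIV)"
    by (rule nn_integral_count_space_nn_integral) auto
  also have "\<dots> = (\<integral>\<^sup>+m. \<phi> m \<partial>count_space UNIV)"
    by (intro nn_integral_cong) (simp add: nn_integral_cmult_indicator)
  finally show ?thesis .
qed

lemma nn_integral_floor_pair:
  fixes Q :: "int \<Rightarrow> int \<Rightarrow> ennreal"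
  shows "(\<integral>\<^sup>+z. Q \<lfloor>fst z\<rfloor> \<lfloor>snd z\<rfloor> \<partial>(lborel :: (real \<times> real) measure))
           = (\<integral>\<^sup>+n. \<integral>\<^sup>+m. Q n m \<partial>count_space UNIV \<partial>count_space UNIV)"
proof -
  have "(\<lambda>z::real \<times> real. Q \<lfloor>fst z\<rfloor> \<lfloor>snd z\<rfloor>) \<in> borel_measurable (lborel \<Otimes>\<^sub>M lborel)"
    by measurable
  then show ?thesis
    using nn_integral_floor[of "\<lambda>n. \<integral>\<^sup>+m. Q n m \<partial>count_space UNIV"]
    by (simp add: lborel_prod[symmetric] lborel.nn_integral_fst[symmetric] nn_integral_floor)
qed


definition extend_by_zero :: "real \<Rightarrow> real \<Rightarrow> (real \<Rightarrow> 'a::real_vector) \<Rightarrow> real \<Rightarrow> 'a" where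
  "extend_by_zero a b f x = indicator {a..b} x *\<^sub>R f x"

lemma extend_by_zero_eq_0 [simp]: "x \<notin> {a..b} \<Longrightarrow> extend_by_zero a b f x = 0"
  unfolding extend_by_zero_def by simp

lemma borel_measurable_extend_by_zero:
  fixes f :: "real \<Rightarrow> 'a::euclidean_space"
  shows "continuous_on {a..b} f \<Longrightarrow> extend_by_zero a b f \<in> borel_measurable borel"
  unfolding extend_by_zero_def[abs_def] by (auto intro: borel_measurable_continuous_on_indicator)

lemma extend_by_zero_bounded:
  fixes f :: "real \<Rightarrow> 'a::real_normed_vector"
  assumes "continuous_on {a..b} f"
  obtains B where "\<And>x. norm (extend_by_zero a b f x) \<le> B"
proof -
  obtain B where "B \<ge> 0" "\<And>x. x \<in> {a..b} \<Longrightarrow> norm (f x) \<le> B"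
    using continuous_on_compact_bound[OF compact_Icc assms] by blast
  then show thesis
    by (intro that[of B]) (auto simp: extend_by_zero_def split: split_indicator)
qed

lemma pair_on_modul_eq_quad_coeff:
  assumes "continuous_on {a..b} f" and "\<forall>x\<in>{a..b}. \<phi> x = 1"
  shows "pair_on a b f (modul \<phi> n m) = quad_coeff (extend_by_zero a b f) n m"
proof -
  have "cnj (modul \<phi> n m x) = e2pi (- (of_int n * x + of_int m * x\<^sup>2))" if "x \<in> {a..b}" for x
  proof -
    have "modul \<phi> n m x = e2pi (of_int n * x) * e2pi (of_int m * x\<^sup>2)"
      using assms(2) that unfolding modul_def e2pi_def by simp
    then show ?thesis
      by (simp add: cnj_e2pi e2pi_add[symmetric])
  qed
  then have "pair_on a b f (modul \<phi> n m) = integral {a..b} (\<lambda>x. f x * e2pi (- (of_int n * x + of_int m * x\<^sup>2)))"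
    unfolding pair_on_def by (intro Henstock_Kurzweil_Integration.integral_cong) simp
  also have "continuous_on {a..b} (\<lambda>x. f x * e2pi (- (of_int n * x + of_int m * x\<^sup>2)))"
    by (intro continuous_intros assms(1))
  note set_borel_integral_eq_integral(2)[OF borel_integrable_atLeastAtMost'[OF this], symmetric]
  finally show ?thesis
    unfolding quad_coeff_def set_lebesgue_integral_def extend_by_zero_def by simp
qed

lemma ME21_eq_pair_on:
  "ME21 \<phi>1 \<phi>2 f g z
     = pair_on 0 1 f (modul \<phi>1 \<lfloor>fst z\<rfloor> \<lfloor>snd z\<rfloor>) * pair_on 4 5 g (modul \<phi>2 \<lfloor>fst z\<rfloor> \<lfloor>snd z\<rfloor>)"
proof -
  have chi_eq: "chi n y = (if \<lfloor>y\<rfloor> = n then 1 else 0)" for n y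
    unfolding chi_def by (simp add: floor_eq_iff)
  obtain x t where z: "z = (x, t)"
    by fastforce
  have "ME21 \<phi>1 \<phi>2 f g z = (\<Sum>\<^sub>\<infinity>(n, m)\<in>{(\<lfloor>x\<rfloor>, \<lfloor>t\<rfloor>)}.
      pair_on 0 1 f (modul \<phi>1 n m) * pair_on 4 5 g (modul \<phi>2 n m) * chi n x * chi m t)"
    unfolding ME21_def z case_prod_conv
    by (rule infsum_cong_neutral) (auto simp: chi_eq split: prod.splits)
  then show ?thesis
    by (simp add: chi_eq z)
qed

lemma nn_integral_norm_sq_ME21:
  assumes "continuous_on {0..1} f" "continuous_on {4..5} g"
    and "\<forall>x\<in>{0..1}. \<phi>1 x = 1" "\<forall>x\<in>{4..5}. \<phi>2 x = 1"
  shows "(\<integral>\<^sup>+z. ennreal ((cmod (ME21 \<phi>1 \<phi>2 f g z))\<^sup>2) \<partial>lborel)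
           = (\<integral>\<^sup>+n. \<integral>\<^sup>+m. ennreal ((cmod (quad_coeff (extend_by_zero 0 1 f) n m
                 * quad_coeff (extend_by_zero 4 5 g) n m))\<^sup>2) \<partial>count_space UNIV \<partial>count_space UNIV)"
  using nn_integral_floor_pair[where Q="\<lambda>n m. ennreal ((cmod (quad_coeff (extend_by_zero 0 1 f) n m
                 * quad_coeff (extend_by_zero 4 5 g) n m))\<^sup>2)"]
  by (simp add: ME21_eq_pair_on pair_on_modul_eq_quad_coeff assms)

lemma
  assumes "continuous_on {a..b} f"
  shows L2_on_nonneg: "0 \<le> L2_on a b f"
    and L2_on_sq: "(L2_on a b f)\<^sup>2 = integral {a..b} (\<lambda>x. (cmod (f x))\<^sup>2)"
proof -
  have "0 \<le> integral {a..b} (\<lambda>x. (cmod (f x))\<^sup>2)"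
    by (intro Henstock_Kurzweil_Integration.integral_nonneg integrable_continuous_interval
        continuous_intros assms) simp
  then show "0 \<le> L2_on a b f" "(L2_on a b f)\<^sup>2 = integral {a..b} (\<lambda>x. (cmod (f x))\<^sup>2)"
    unfolding L2_on_def by simp_all
qed

lemma nn_integral_norm_sq_extend_by_zero:
  assumes "continuous_on {a..b} f"
  shows "(\<integral>\<^sup>+x. ennreal ((cmod (extend_by_zero a b f x))\<^sup>2) \<partial>lborel) = ennreal ((L2_on a b f)\<^sup>2)"
proof -
  have cont: "continuous_on {a..b} (\<lambda>x. (cmod (f x))\<^sup>2)"
    by (intro continuous_intros assms)
  have "(\<integral>\<^sup>+x. ennreal ((cmod (extend_by_zero a b f x))\<^sup>2) \<partial>lborel)
      = (\<integral>\<^sup>+x. ennreal (indicator {a..b} x *\<^sub>R (cmod (f x))\<^sup>2) \<partial>lborel)"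
    by (intro nn_integral_cong) (simp add: extend_by_zero_def split: split_indicator)
  also have "\<dots> = ennreal (LINT x|lborel. indicator {a..b} x *\<^sub>R (cmod (f x))\<^sup>2)"
    using borel_integrable_atLeastAtMost'[OF cont] unfolding set_integrable_def
    by (intro nn_integral_eq_integral) (auto split: split_indicator)
  also have "\<dots> = ennreal ((L2_on a b f)\<^sup>2)"
    using set_borel_integral_eq_integral(2)[OF borel_integrable_atLeastAtMost'[OF cont]]
    unfolding set_lebesgue_integral_def L2_on_sq[OF assms] by simp
  finally show ?thesis .
qed

lemma nn_integral_quad_coeff_extend_by_zero_le:
  assumes f: "continuous_on {0..1} f" and g: "continuous_on {4..5} g"
  shows "(\<integral>\<^sup>+n. \<integral>\<^sup>+m. ennreal ((cmod (quad_coeff (extend_by_zero 0 1 f) n m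
              * quad_coeff (extend_by_zero 4 5 g) n m))\<^sup>2) \<partial>count_space UNIV \<partial>count_space UNIV)
           \<le> ennreal ((sqrt 5 * L2_on 0 1 f * L2_on 4 5 g)\<^sup>2)"
proof -
  obtain BF BG where "\<And>x. cmod (extend_by_zero 0 1 f x) \<le> BF" "\<And>x. cmod (extend_by_zero 4 5 g x) \<le> BG"
    using extend_by_zero_bounded[OF f] extend_by_zero_bounded[OF g] by metis
  then interpret separated_supports "extend_by_zero 0 1 f" "extend_by_zero 4 5 g" BF BG
    by unfold_locales (simp_all add: borel_measurable_extend_by_zero f g)
  from nn_integral_quad_coeff_sq_le show ?thesis
    by (simp add: nn_integral_norm_sq_extend_by_zero f g power_mult_distrib ennreal_mult)
qed

lemma L2_R2_le:
  assumes "(\<integral>\<^sup>+z. ennreal ((cmod (h z))\<^sup>2) \<partial>lborel) \<le> ennreal (c\<^sup>2)" and "0 \<le> c"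
  shows "L2_R2 h \<le> ennreal c"
proof -
  define I where "I = (\<integral>\<^sup>+z. ennreal ((cmod (h z))\<^sup>2) \<partial>lborel)"
  have "I \<noteq> \<infinity>"
    using assms(1) unfolding I_def by (auto simp: top_unique)
  moreover have "sqrt (enn2real I) \<le> c"
    using assms enn2real_leI[OF _ assms(1)] unfolding I_def by (simp add: real_le_lsqrt)
  ultimately show ?thesis
    unfolding L2_R2_def Let_def I_def[symmetric] by (simp add: ennreal_leI)
qed

theorem proposition4p4:
  fixes \<phi>1 \<phi>2 :: "real \<Rightarrow> complex"
  assumes "smooth_cc \<phi>1" and "\<forall>x\<in>{0..1}. \<phi>1 x = 1"
    and "smooth_cc \<phi>2" and "\<forall>x\<in>{4..5}. \<phi>2 x = 1"
  shows "\<exists>C::real. \<forall>f g :: real \<Rightarrow> complex.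
           continuous_on {0..1} f \<longrightarrow> continuous_on {4..5} g \<longrightarrow>
           L2_R2 (ME21 \<phi>1 \<phi>2 f g) \<le> ennreal (C * L2_on 0 1 f * L2_on 4 5 g)"
proof (intro exI[of _ "sqrt 5"] allI impI)
  fix f g :: "real \<Rightarrow> complex"
  assume f: "continuous_on {0..1} f" and g: "continuous_on {4..5} g"
  have "(\<integral>\<^sup>+z. ennreal ((cmod (ME21 \<phi>1 \<phi>2 f g z))\<^sup>2) \<partial>lborel)
      \<le> ennreal ((sqrt 5 * L2_on 0 1 f * L2_on 4 5 g)\<^sup>2)"
    unfolding nn_integral_norm_sq_ME21[OF f g assms(2,4)]
    by (rule nn_integral_quad_coeff_extend_by_zero_le[OF f g])
  then show "L2_R2 (ME21 \<phi>1 \<phi>2 f g) \<le> ennreal (sqrt 5 * L2_on 0 1 f * L2_on 4 5 g)"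
    by (rule L2_R2_le) (simp add: L2_on_nonneg f g)
qed

end
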